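(* Let $\theta\sim\mathrm{Beta}(a,b)$ with $a,b>0$ and, given $\theta$, let $X_1,X_2,\dots$ be i.i.d. $\mathrm{Bernoulli}(\theta)$; let $\mathcal{F}_n=\sigma(X_1,\dots,X_n)$ and $m_n=\mathbb{E}[\theta\mid\mathcal{F}_n]$. Let $(K_n)$ be positive integers with $K_n=o(\sqrt n)$. Then $$\sup_{1\le k\le K_n}\bigl|\mathbb{E}[(1-\theta)^k\mid\mathcal{F}_n]-(1-m_n)^k\bigr|\to0\quad\text{a.s.}$$ *)

theory Defs
  imports "HOL-Probability.Probability" "HOL-Library.Landau_Symbols"
begin

definition beta_density :: "real \<Rightarrow> real \<Rightarrow> real \<Rightarrow> real" where
  "beta_density a b t =
     (if 0 < t \<and> t < 1 then t powr (a - 1) * (1 - t) powr (b - 1) / Beta a b else 0)"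

text \<open>Natural filtration of the observations: F n is generated by X_1,...,X_n,
  which are X 0, ..., X (n-1) here (0-based indexing).\<close>
definition obs_filtration :: "'w measure \<Rightarrow> (nat \<Rightarrow> 'w \<Rightarrow> bool) \<Rightarrow> nat \<Rightarrow> 'w measure" where
  "obs_filtration M X n = sigma (space M) {X i -` {True} \<inter> space M | i. i < n}"

text \<open>Joint law of (theta, X_1, X_2, ...): theta ~ Beta(a,b) and, given theta,
  the X_i are i.i.d. Bernoulli(theta). This is expressed by specifying all
  finite-dimensional joint probabilities, which determine the joint law.\<close>
definition beta_bernoulli_model ::
  "'w measure \<Rightarrow> real \<Rightarrow> real \<Rightarrow> ('w \<Rightarrow> real) \<Rightarrow> (nat \<Rightarrow> 'w \<Rightarrow> bool) \<Rightarrow> bool" where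
  "beta_bernoulli_model M a b \<theta> X \<longleftrightarrow>
     prob_space M \<and> \<theta> \<in> borel_measurable M \<and>
     (\<forall>i. X i \<in> measurable M (count_space UNIV)) \<and>
     (\<forall>A \<in> sets borel. \<forall>n. \<forall>x :: nat \<Rightarrow> bool.
        measure M {\<omega> \<in> space M. \<theta> \<omega> \<in> A \<and> (\<forall>i<n. X i \<omega> = x i)} =
        (LINT t:A|lborel. t ^ card {i. i < n \<and> x i} * (1 - t) ^ card {i. i < n \<and> \<not> x i}
                            * beta_density a b t))"

end

theory Submission
  imports Defs
begin

text \<open>After n observations with s successes, Beta-Bernoulli conjugacy makes the posterior of
  \<theta> the Beta(p, q) law with p = a + s and q = b + n - s. Hence
  E[\<theta> | F n] = p / (p + q) and E[(1 - \<theta>)^k | F n] = \<Prod>j<k. (q + j) / (p + q + j).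
  Comparing this product factor by factor with (q / (p + q))^k bounds the gap by
  k^2 / (a + b + n), for every outcome at once; since K n^2 = o(n), the maximum over
  k \<le> K n tends to 0.\<close>

lemma Beta_real_pos: "p > 0 \<Longrightarrow> q > 0 \<Longrightarrow> Beta p q > (0::real)"
  by (simp add: Beta_def)

lemma beta_density_nonneg: "p > 0 \<Longrightarrow> q > 0 \<Longrightarrow> beta_density p q t \<ge> 0"
  by (simp add: beta_density_def Beta_real_pos less_imp_le)

lemma
  assumes "p > 0" "q > 0"
  shows integrable_beta_density: "integrable lborel (beta_density p q)"
    and integral_beta_density: "(LINT t|lborel. beta_density p q t) = 1"
proof -
  have eq: "beta_density p q =
      (\<lambda>t. indicator {0..1} t *\<^sub>R (t powr (p - 1) * (1 - t) powr (q - 1) / Beta p q))"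
    by (auto simp: beta_density_def indicator_def fun_eq_iff)
  have int: "set_integrable lborel {0..1} (\<lambda>t. t powr (p - 1) * (1 - t) powr (q - 1) / Beta p q)"
    using integrable_Beta[OF assms] by (rule set_integrable_divide)
  then show "integrable lborel (beta_density p q)"
    unfolding eq set_integrable_def .
  have "(LINT t:{0..1}|lborel. t powr (p - 1) * (1 - t) powr (q - 1) / Beta p q)
      = integral {0..1} (\<lambda>t. t powr (p - 1) * (1 - t) powr (q - 1)) / Beta p q"
    by (subst set_borel_integral_eq_integral(2)[OF int]) simp
  also have "\<dots> = 1"
    using has_integral_Beta_real[OF assms] Beta_real_pos[OF assms] by (simp add: integral_unique)
  finally show "(LINT t|lborel. beta_density p q t) = 1"
    unfolding eq set_lebesgue_integral_def .
qed

lemma borel_measurable_beta_density [measurable]: "beta_density p q \<in> borel_measurable borel"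
  unfolding beta_density_def by measurable

lemma monomial_mult_beta_density:
  assumes "p > 0" "q > 0"
  shows "t ^ j * (1 - t) ^ m * beta_density p q t
    = Beta (p + j) (q + m) / Beta p q * beta_density (p + j) (q + m) t"
proof (cases "0 < t \<and> t < 1")
  case True
  have "t powr (p + j - 1) = t ^ j * t powr (p - 1)"
    and "(1 - t) powr (q + m - 1) = (1 - t) ^ m * (1 - t) powr (q - 1)"
    using True by (simp_all add: powr_add[symmetric] powr_realpow[symmetric] algebra_simps)
  then show ?thesis
    using True assms Beta_real_pos[of "p + j" "q + m"] by (simp add: beta_density_def)
qed (auto simp: beta_density_def)

definition beta_expectation :: "real \<Rightarrow> real \<Rightarrow> (real \<Rightarrow> real) \<Rightarrow> real" where
  "beta_expectation p q h = (LINT t|lborel. beta_density p q t * h t)"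

lemma beta_expectation_monomial:
  assumes "p > 0" "q > 0"
  shows "beta_expectation p q (\<lambda>t. t ^ j * (1 - t) ^ m) = Beta (p + j) (q + m) / Beta p q"
proof -
  have "beta_expectation p q (\<lambda>t. t ^ j * (1 - t) ^ m)
      = (LINT t|lborel. Beta (p + j) (q + m) / Beta p q * beta_density (p + j) (q + m) t)"
    unfolding beta_expectation_def
    by (intro Bochner_Integration.integral_cong refl)
       (simp only: mult.commute[of "beta_density p q _"] monomial_mult_beta_density[OF assms])
  also have "\<dots> = Beta (p + j) (q + m) / Beta p q"
    using assms by (simp add: integral_beta_density)
  finally show ?thesis .
qed

lemma beta_expectation_id:
  assumes "p > 0" "q > 0"
  shows "beta_expectation p q (\<lambda>t. t) = p / (p + q)"
proof -
  have "(p + q) * Beta (p + 1) q = p * Beta p q"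
    using assms by (intro Beta_plus1_left) (auto dest: nonpos_Ints_nonpos)
  then have "Beta (p + 1) q = p / (p + q) * Beta p q"
    using assms by (simp add: field_simps)
  then show ?thesis
    using beta_expectation_monomial[OF assms, of 1 0] Beta_real_pos[OF assms] by simp
qed

lemma Beta_plus_nat_right:
  fixes p q :: real and k :: nat
  assumes "p > 0" "q > 0"
  shows "Beta p (q + k) = Beta p q * (\<Prod>j<k. (q + j) / (p + q + j))"
proof (induction k)
  case (Suc k)
  have "(p + (q + k)) * Beta p (q + k + 1) = (q + k) * Beta p (q + k)"
    using assms by (intro Beta_plus1_right) (auto dest: nonpos_Ints_nonpos)
  with Suc.IH assms show ?case
    by (simp add: field_simps add.assoc)
qed simp

lemma beta_expectation_one_minus_power:
  fixes p q :: real and k :: nat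
  assumes "p > 0" "q > 0"
  shows "beta_expectation p q (\<lambda>t. (1 - t) ^ k) = (\<Prod>j<k. (q + j) / (p + q + j))"
  using beta_expectation_monomial[OF assms, of 0 k] Beta_plus_nat_right[OF assms, of k]
    Beta_real_pos[OF assms] by simp

lemma rising_ratio_prod_power_diff_le:
  fixes p q :: real and k :: nat
  assumes "p > 0" "q > 0"
  shows "\<bar>(\<Prod>j<k. (q + j) / (p + q + j)) - (q / (p + q)) ^ k\<bar> \<le> real k ^ 2 / (p + q)"
proof -
  have step: "\<bar>(q + j) / (p + q + j) - q / (p + q)\<bar> \<le> k / (p + q)" if "j < k" for j
  proof -
    have "(q + j) / (p + q + j) - q / (p + q) = j / (p + q) * (p / (p + q + j))"
      using assms by (simp add: field_simps)
    also have "\<dots> \<le> j / (p + q)"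
      using assms by (intro mult_left_le) auto
    also have "\<dots> \<le> k / (p + q)"
      using assms that by (simp add: divide_right_mono)
    finally show ?thesis
      using assms by (simp add: field_simps)
  qed
  have "\<bar>(\<Prod>j<k. (q + j) / (p + q + j)) - (\<Prod>j<k. q / (p + q))\<bar>
      \<le> (\<Sum>j<k. \<bar>(q + j) / (p + q + j) - q / (p + q)\<bar>)"
    using norm_prod_diff[of "{..<k}" "\<lambda>j. (q + j) / (p + q + j)" "\<lambda>_. q / (p + q)"] assms
    by simp
  also have "\<dots> \<le> (\<Sum>j<k. k / (p + q))"
    using step by (intro sum_mono) simp
  finally show ?thesis
    by (simp add: power2_eq_square)
qed

lemma smallo_sqrt_square_div_tendsto_zero:
  fixes f :: "nat \<Rightarrow> real" and c :: real
  assumes "f \<in> o(\<lambda>n. sqrt (real n))" and "c \<ge> 0"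
  shows "(\<lambda>n. f n ^ 2 / (c + n)) \<longlonglongrightarrow> 0"
proof (rule Lim_null_comparison)
  show "(\<lambda>n. (f n / sqrt n) ^ 2) \<longlonglongrightarrow> 0"
    using tendsto_power[OF smalloD_tendsto[OF assms(1)], of 2] by simp
  show "\<forall>\<^sub>F n in sequentially. norm (f n ^ 2 / (c + n)) \<le> (f n / sqrt n) ^ 2"
  proof (rule eventually_sequentiallyI[of 1])
    fix n :: nat assume "n \<ge> 1"
    then show "norm (f n ^ 2 / (c + n)) \<le> (f n / sqrt n) ^ 2"
      using assms(2) by (simp add: power_divide divide_left_mono)
  qed
qed

definition successes :: "(nat \<Rightarrow> 'w \<Rightarrow> bool) \<Rightarrow> nat \<Rightarrow> 'w \<Rightarrow> nat set" where
  "successes X n \<omega> = {i. i < n \<and> X i \<omega>}"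

definition obs_cylinder :: "'w measure \<Rightarrow> (nat \<Rightarrow> 'w \<Rightarrow> bool) \<Rightarrow> nat \<Rightarrow> nat set \<Rightarrow> 'w set" where
  "obs_cylinder M X n S = {\<omega> \<in> space M. \<forall>i<n. X i \<omega> \<longleftrightarrow> i \<in> S}"

lemma successes_subset: "successes X n \<omega> \<subseteq> {..<n}"
  by (auto simp: successes_def)

lemma card_successes_le: "card (successes X n \<omega>) \<le> n"
  using card_mono[OF _ successes_subset, of n X \<omega>] by simp

lemma mem_obs_cylinder_iff:
  "S \<subseteq> {..<n} \<Longrightarrow> \<omega> \<in> space M \<Longrightarrow> \<omega> \<in> obs_cylinder M X n S \<longleftrightarrow> successes X n \<omega> = S"
  by (auto simp: obs_cylinder_def successes_def)

lemma space_obs_filtration [simp]: "space (obs_filtration M X n) = space M"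
  unfolding obs_filtration_def by (rule space_measure_of) auto

lemma sets_obs_filtration:
  "sets (obs_filtration M X n) = sigma_sets (space M) {X i -` {True} \<inter> space M | i. i < n}"
  unfolding obs_filtration_def by (rule sets_measure_of) auto

lemma obs_cylinder_in_obs_filtration: "obs_cylinder M X n S \<in> sets (obs_filtration M X n)"
proof -
  have *: "{\<omega> \<in> space M. X i \<omega> \<longleftrightarrow> i \<in> S} \<in> sets (obs_filtration M X n)" if "i \<in> {..<n}" for i
  proof -
    have gen: "X i -` {True} \<inter> space M \<in> sets (obs_filtration M X n)"
      using that unfolding sets_obs_filtration by (intro sigma_sets.Basic) auto
    show ?thesis
    proof (cases "i \<in> S")
      case True
      with gen show ?thesis by (simp add: vimage_def Int_def conj_commute)
    next
      case False
      have "{\<omega> \<in> space M. X i \<omega> \<longleftrightarrow> i \<in> S} = space (obs_filtration M X n) - X i -` {True} \<inter> space M"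
        using False by auto
      with gen show ?thesis by (metis sets.compl_sets)
    qed
  qed
  have "obs_cylinder M X n S = {\<omega> \<in> space (obs_filtration M X n). \<forall>i\<in>{..<n}. X i \<omega> \<longleftrightarrow> i \<in> S}"
    by (auto simp: obs_cylinder_def)
  also have "\<dots> \<in> sets (obs_filtration M X n)"
    using * by (intro sets.sets_Collect_countable_All') simp_all
  finally show ?thesis .
qed

lemma obs_filtration_saturated:
  assumes "A \<in> sets (obs_filtration M X n)" "\<omega> \<in> A" "\<omega>' \<in> space M"
    and "successes X n \<omega>' = successes X n \<omega>"
  shows "\<omega>' \<in> A"
  using assms unfolding sets_obs_filtration
proof (induction arbitrary: \<omega> \<omega>' rule: sigma_sets.induct)
  case (Basic A)
  then obtain i where "i < n" "A = X i -` {True} \<inter> space M" by blast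
  with Basic.prems show ?case by (auto simp: successes_def set_eq_iff)
next
  case (Compl A)
  then show ?case by (metis DiffE DiffI)
next
  case (Union A)
  then show ?case by blast
qed simp

lemma indicator_obs_filtration_set:
  assumes "A \<in> sets (obs_filtration M X n)" "\<omega> \<in> space M"
  shows "indicator A \<omega> = (\<Sum>S\<in>successes X n ` A. indicator (obs_cylinder M X n S) \<omega> :: real)"
proof -
  have fin: "finite (successes X n ` A)"
    by (rule finite_subset[of _ "Pow {..<n}"]) (auto simp: successes_def)
  have "indicator (obs_cylinder M X n S) \<omega> = (if S = successes X n \<omega> then 1 else 0 :: real)"
    if "S \<in> successes X n ` A" for S
  proof -
    from that obtain \<omega>' where "S = successes X n \<omega>'" by blast
    then show ?thesis
      using mem_obs_cylinder_iff[OF successes_subset assms(2), of X n X \<omega>'] by (auto simp: indicator_def)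
  qed
  then have "(\<Sum>S\<in>successes X n ` A. indicator (obs_cylinder M X n S) \<omega> :: real)
      = (\<Sum>S\<in>successes X n ` A. if S = successes X n \<omega> then 1 else 0)"
    by (intro sum.cong refl)
  also have "\<dots> = indicator A \<omega>"
    using fin obs_filtration_saturated[OF assms(1) _ assms(2)] by (auto simp: sum.delta indicator_def)
  finally show ?thesis ..
qed

lemma comp_successes_eq_sum:
  "\<omega> \<in> space M \<Longrightarrow>
    g (successes X n \<omega>) = (\<Sum>S\<in>Pow {..<n}. g S * indicator (obs_cylinder M X n S) \<omega> :: real)"
  using successes_subset[of X n \<omega>]
  by (simp add: mem_obs_cylinder_iff indicator_def sum.delta eq_commute cong: if_cong)

lemma borel_measurable_comp_successes:
  "(\<lambda>\<omega>. g (successes X n \<omega>) :: real) \<in> borel_measurable (obs_filtration M X n)"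
proof -
  have "(\<lambda>\<omega>. \<Sum>S\<in>Pow {..<n}. g S * indicator (obs_cylinder M X n S) \<omega> :: real)
      \<in> borel_measurable (obs_filtration M X n)"
    using obs_cylinder_in_obs_filtration by measurable
  then show ?thesis
    by (rule measurable_cong[THEN iffD1, rotated]) (simp add: comp_successes_eq_sum)
qed

locale beta_bernoulli = prob_space M
  for M :: "'w measure" and a b :: real and \<theta> :: "'w \<Rightarrow> real" and X :: "nat \<Rightarrow> 'w \<Rightarrow> bool" +
  assumes a_pos: "a > 0" and b_pos: "b > 0"
    and theta_measurable [measurable]: "\<theta> \<in> borel_measurable M"
    and X_measurable [measurable]: "X i \<in> measurable M (count_space UNIV)"
    and joint_law: "A \<in> sets borel \<Longrightarrow>
      measure M {\<omega> \<in> space M. \<theta> \<omega> \<in> A \<and> (\<forall>i<n. X i \<omega> = x i)} =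
      (LINT t:A|lborel. t ^ card {i. i < n \<and> x i} * (1 - t) ^ card {i. i < n \<and> \<not> x i}
                          * beta_density a b t)"

lemma beta_bernoulli_modelD:
  "a > 0 \<Longrightarrow> b > 0 \<Longrightarrow> beta_bernoulli_model M a b \<theta> X \<Longrightarrow> beta_bernoulli M a b \<theta> X"
  by (simp add: beta_bernoulli_model_def beta_bernoulli_def beta_bernoulli_axioms_def)

context beta_bernoulli
begin

lemma subalgebra_obs_filtration: "subalgebra M (obs_filtration M X n)"
proof -
  have "{X i -` {True} \<inter> space M | i. i < n} \<subseteq> sets M"
    by (auto intro: measurable_sets[OF X_measurable])
  then show ?thesis
    unfolding subalgebra_def sets_obs_filtration by (simp add: sets.sigma_sets_subset)
qed

lemma sigma_finite_subalgebra_obs_filtration: "sigma_finite_subalgebra M (obs_filtration M X n)"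
  by (intro finite_measure_subalgebra_is_sigma_finite)
     (simp add: finite_measure_subalgebra_def finite_measure_subalgebra_axioms_def
                subalgebra_obs_filtration finite_measure_axioms)

lemma obs_cylinder_in_sets [measurable]: "obs_cylinder M X n S \<in> sets M"
  using obs_cylinder_in_obs_filtration[of M X n S] subalgebra_obs_filtration[of n]
  by (auto simp: subalgebra_def)

lemma measure_obs_cylinder_inter_theta:
  assumes "S \<subseteq> {..<n}" and [measurable]: "A \<in> sets borel"
  defines "p \<equiv> a + card S" and "q \<equiv> b + (n - card S)"
  shows "measure M (obs_cylinder M X n S \<inter> \<theta> -` A)
    = (LINT t:A|lborel. Beta p q / Beta a b * beta_density p q t)"
proof -
  have "{i. i < n \<and> i \<in> S} = S" "{i. i < n \<and> i \<notin> S} = {..<n} - S"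
    using assms(1) by auto
  then have "card {i. i < n \<and> i \<in> S} = card S" "card {i. i < n \<and> i \<notin> S} = n - card S"
    using assms(1) card_Diff_subset[OF finite_subset[OF assms(1)] assms(1)] by simp_all
  moreover have "obs_cylinder M X n S \<inter> \<theta> -` A
      = {\<omega> \<in> space M. \<theta> \<omega> \<in> A \<and> (\<forall>i<n. X i \<omega> = (i \<in> S))}"
    by (auto simp: obs_cylinder_def)
  ultimately show ?thesis
    using joint_law[OF assms(2), of n "\<lambda>i. i \<in> S"] a_pos b_pos
    by (simp add: p_def q_def monomial_mult_beta_density)
qed

lemma distr_theta_on_obs_cylinder:
  assumes "S \<subseteq> {..<n}"
  defines "p \<equiv> a + card S" and "q \<equiv> b + (n - card S)"
  shows "distr (density M (indicator (obs_cylinder M X n S))) borel \<theta>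
    = density lborel (\<lambda>t. ennreal (Beta p q / Beta a b * beta_density p q t))"
    (is "distr ?N borel \<theta> = density lborel (\<lambda>t. ennreal (?f t))")
proof (rule measure_eqI)
  fix A assume "A \<in> sets (distr ?N borel \<theta>)"
  then have A [measurable]: "A \<in> sets borel" by simp
  have pq: "p > 0" "q > 0"
    using a_pos b_pos by (simp_all add: p_def q_def)
  have f_nonneg: "?f t \<ge> 0" for t
    using Beta_real_pos[OF pq] Beta_real_pos[OF a_pos b_pos] beta_density_nonneg[OF pq] by simp
  have f_int: "integrable lborel ?f"
    using integrable_beta_density[OF pq] by simp
  have "obs_cylinder M X n S \<inter> \<theta> -` A = obs_cylinder M X n S \<inter> (\<theta> -` A \<inter> space M)"
    by (auto simp: obs_cylinder_def)
  then have cyl_sets: "obs_cylinder M X n S \<inter> \<theta> -` A \<in> sets M"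
    using measurable_sets[OF theta_measurable A] by simp
  have "emeasure (distr ?N borel \<theta>) A = emeasure ?N (\<theta> -` A \<inter> space M)"
    by (simp add: emeasure_distr)
  also have "\<dots> = \<integral>\<^sup>+ \<omega>. indicator (obs_cylinder M X n S \<inter> \<theta> -` A) \<omega> \<partial>M"
    by (subst emeasure_density) (auto intro!: nn_integral_cong simp: indicator_def)
  also have "\<dots> = ennreal (LINT t:A|lborel. ?f t)"
    using cyl_sets
    by (simp add: emeasure_eq_measure nn_integral_indicator measure_obs_cylinder_inter_theta[OF assms(1) A]
                  p_def q_def)
  also have "\<dots> = \<integral>\<^sup>+ t. ennreal (indicator A t * ?f t) \<partial>lborel"
    unfolding set_lebesgue_integral_def real_scaleR_def
  proof (intro nn_integral_eq_integral[symmetric])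
    show "integrable lborel (\<lambda>t. indicator A t * ?f t)"
      using integrable_mult_indicator[OF _ f_int, of A] by simp
  qed (intro AE_I2 mult_nonneg_nonneg f_nonneg; simp)
  also have "\<dots> = emeasure (density lborel ?f) A"
    by (subst emeasure_density) (auto intro!: nn_integral_cong simp: indicator_def)
  finally show "emeasure (distr ?N borel \<theta>) A = emeasure (density lborel ?f) A" .
qed simp

lemma integral_obs_cylinder:
  assumes "S \<subseteq> {..<n}" and [measurable]: "h \<in> borel_measurable borel"
  defines "p \<equiv> a + card S" and "q \<equiv> b + (n - card S)"
  shows "(\<integral>\<omega>. indicator (obs_cylinder M X n S) \<omega> * h (\<theta> \<omega>) \<partial>M)
    = Beta p q / Beta a b * beta_expectation p q h"
proof -
  have pq: "p > 0" "q > 0"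
    using a_pos b_pos by (simp_all add: p_def q_def)
  let ?N = "density M (indicator (obs_cylinder M X n S))"
  have "(\<integral>\<omega>. indicator (obs_cylinder M X n S) \<omega> * h (\<theta> \<omega>) \<partial>M)
      = (\<integral>\<omega>. h (\<theta> \<omega>) \<partial>density M (\<lambda>\<omega>. ennreal (indicator (obs_cylinder M X n S) \<omega>)))"
    by (subst integral_density) auto
  also have "\<dots> = (\<integral>\<omega>. h (\<theta> \<omega>) \<partial>?N)"
    by (simp only: ennreal_indicator)
  also have "\<dots> = (\<integral>t. h t \<partial>distr ?N borel \<theta>)"
    by (subst integral_distr) auto
  also have "\<dots> = (LINT t|lborel. Beta p q / Beta a b * beta_density p q t * h t)"
    unfolding distr_theta_on_obs_cylinder[OF assms(1)] p_def[symmetric] q_def[symmetric]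
    using Beta_real_pos[OF pq] Beta_real_pos[OF a_pos b_pos] beta_density_nonneg[OF pq]
    by (subst integral_density) auto
  also have "\<dots> = Beta p q / Beta a b * beta_expectation p q h"
    by (simp add: beta_expectation_def mult.assoc)
  finally show ?thesis .
qed

lemma AE_theta_in_unit_interval: "AE \<omega> in M. 0 < \<theta> \<omega> \<and> \<theta> \<omega> < 1"
proof (rule AE_I')
  have "measure M {\<omega> \<in> space M. \<theta> \<omega> \<in> - {0<..<1} \<and> (\<forall>i<0. X i \<omega> = False)}
      = (LINT t:- {0<..<1}|lborel. beta_density a b t)"
    using joint_law[of "- {0<..<1}" 0 "\<lambda>_. False"] by simp
  also have "\<dots> = 0"
  proof -
    have "(\<lambda>t. indicator (- {0<..<1}) t *\<^sub>R beta_density a b t) = (\<lambda>_. 0 :: real)"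
      by (auto simp: fun_eq_iff beta_density_def)
    then show ?thesis
      unfolding set_lebesgue_integral_def by simp
  qed
  finally show "{\<omega> \<in> space M. \<theta> \<omega> \<in> - {0<..<1}} \<in> null_sets M"
    by (simp add: null_sets_def emeasure_eq_measure)
qed auto

lemma integrable_bounded_comp_theta:
  fixes B :: real
  assumes [measurable]: "h \<in> borel_measurable borel" and "\<And>t. 0 < t \<Longrightarrow> t < 1 \<Longrightarrow> \<bar>h t\<bar> \<le> B"
  shows "integrable M (\<lambda>\<omega>. h (\<theta> \<omega>))"
proof (rule integrable_const_bound[where B = B])
  show "AE \<omega> in M. norm (h (\<theta> \<omega>)) \<le> B"
    using AE_theta_in_unit_interval by eventually_elim (simp add: assms(2))
qed simp

lemma integrable_comp_successes: "integrable M (\<lambda>\<omega>. g (successes X n \<omega>) :: real)"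
proof -
  have "integrable M (\<lambda>\<omega>. \<Sum>S\<in>Pow {..<n}. g S * indicator (obs_cylinder M X n S) \<omega> :: real)"
    by (intro Bochner_Integration.integrable_sum integrable_mult_right integrable_real_indicator)
       (simp_all add: emeasure_eq_measure)
  then show ?thesis
    by (simp add: comp_successes_eq_sum cong: Bochner_Integration.integrable_cong)
qed

lemma set_integral_obs_filtration:
  fixes u :: "'w \<Rightarrow> real"
  assumes "A \<in> sets (obs_filtration M X n)" and "integrable M u"
  shows "(LINT \<omega>:A|M. u \<omega>)
    = (\<Sum>S\<in>successes X n ` A. \<integral>\<omega>. indicator (obs_cylinder M X n S) \<omega> * u \<omega> \<partial>M)"
proof -
  have "(LINT \<omega>:A|M. u \<omega>)
      = (\<integral>\<omega>. (\<Sum>S\<in>successes X n ` A. indicator (obs_cylinder M X n S) \<omega> * u \<omega>) \<partial>M)"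
    unfolding set_lebesgue_integral_def
    by (intro Bochner_Integration.integral_cong refl)
       (simp add: indicator_obs_filtration_set[OF assms(1)] sum_distrib_right real_scaleR_def)
  also have "\<dots> = (\<Sum>S\<in>successes X n ` A. \<integral>\<omega>. indicator (obs_cylinder M X n S) \<omega> * u \<omega> \<partial>M)"
    using integrable_mult_indicator[OF obs_cylinder_in_sets assms(2)]
    by (intro Bochner_Integration.integral_sum) simp
  finally show ?thesis .
qed

theorem real_cond_exp_theta_obs_filtration:
  assumes [measurable]: "h \<in> borel_measurable borel" and "integrable M (\<lambda>\<omega>. h (\<theta> \<omega>))"
  shows "AE \<omega> in M. real_cond_exp M (obs_filtration M X n) (\<lambda>\<omega>. h (\<theta> \<omega>)) \<omega>
    = beta_expectation (a + card (successes X n \<omega>)) (b + (n - card (successes X n \<omega>))) h"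
proof -
  interpret sigma_finite_subalgebra M "obs_filtration M X n"
    by (rule sigma_finite_subalgebra_obs_filtration)
  define E where "E S = beta_expectation (a + card S) (b + (n - card S)) h" for S :: "nat set"
  have E_integrable: "integrable M (\<lambda>\<omega>. E (successes X n \<omega>))"
    by (rule integrable_comp_successes)
  \<comment> \<open>Bayes' rule on a cylinder: both sides equal P(cylinder) * E S = Beta p q / Beta a b * E S.\<close>
  have on_cylinder: "(\<integral>\<omega>. indicator (obs_cylinder M X n S) \<omega> * h (\<theta> \<omega>) \<partial>M)
      = (\<integral>\<omega>. indicator (obs_cylinder M X n S) \<omega> * E (successes X n \<omega>) \<partial>M)"
    if S: "S \<subseteq> {..<n}" for S
  proof -
    have pq: "a + card S > 0" "b + (n - card S) > 0"
      using a_pos b_pos by simp_all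
    have "(\<integral>\<omega>. indicator (obs_cylinder M X n S) \<omega> * E (successes X n \<omega>) \<partial>M)
        = (\<integral>\<omega>. indicator (obs_cylinder M X n S) \<omega> * E S \<partial>M)"
      using S by (intro Bochner_Integration.integral_cong refl)
                 (auto simp: indicator_def mem_obs_cylinder_iff)
    also have "\<dots> = (\<integral>\<omega>. indicator (obs_cylinder M X n S) \<omega> * h (\<theta> \<omega>) \<partial>M)"
      using integral_obs_cylinder[OF S, of "\<lambda>_. 1"]
      by (simp add: integral_obs_cylinder[OF S] E_def beta_expectation_def integral_beta_density[OF pq])
    finally show ?thesis ..
  qed
  have "AE \<omega> in M. real_cond_exp M (obs_filtration M X n) (\<lambda>\<omega>. h (\<theta> \<omega>)) \<omega> = E (successes X n \<omega>)"
  proof (rule real_cond_exp_charact[OF _ assms(2) E_integrable borel_measurable_comp_successes])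
    fix A assume A: "A \<in> sets (obs_filtration M X n)"
    show "(LINT \<omega>:A|M. h (\<theta> \<omega>)) = (LINT \<omega>:A|M. E (successes X n \<omega>))"
      unfolding set_integral_obs_filtration[OF A assms(2)] set_integral_obs_filtration[OF A E_integrable]
      by (intro sum.cong refl on_cylinder) (auto simp: successes_def)
  qed
  then show ?thesis
    by (simp add: E_def)
qed

lemma posterior_power_gap_le:
  "AE \<omega> in M. \<forall>n k.
     \<bar>real_cond_exp M (obs_filtration M X n) (\<lambda>\<omega>'. (1 - \<theta> \<omega>') ^ k) \<omega>
        - (1 - real_cond_exp M (obs_filtration M X n) \<theta> \<omega>) ^ k\<bar> \<le> real k ^ 2 / (a + b + n)"
proof -
  have "AE \<omega> in M. \<forall>n k. real_cond_exp M (obs_filtration M X n) (\<lambda>\<omega>'. (1 - \<theta> \<omega>') ^ k) \<omega>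
      = beta_expectation (a + card (successes X n \<omega>)) (b + (n - card (successes X n \<omega>))) (\<lambda>t. (1 - t) ^ k)"
    unfolding AE_all_countable
    by (intro allI real_cond_exp_theta_obs_filtration integrable_bounded_comp_theta[where B = 1])
       (auto simp: power_le_one)
  moreover have "AE \<omega> in M. \<forall>n. real_cond_exp M (obs_filtration M X n) \<theta> \<omega>
      = beta_expectation (a + card (successes X n \<omega>)) (b + (n - card (successes X n \<omega>))) (\<lambda>t. t)"
    unfolding AE_all_countable
    using real_cond_exp_theta_obs_filtration[of "\<lambda>t. t"] integrable_bounded_comp_theta[of "\<lambda>t. t" 1]
    by auto
  ultimately show ?thesis
  proof eventually_elim
    case (elim \<omega>)
    show ?case
    proof (intro allI)
      fix n k
      define p where "p = a + card (successes X n \<omega>)"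
      define q where "q = b + (n - card (successes X n \<omega>))"
      have pq: "p > 0" "q > 0" "p + q = a + b + n"
        using a_pos b_pos card_successes_le[of X n \<omega>] by (simp_all add: p_def q_def)
      have "1 - p / (p + q) = q / (p + q)"
        using pq by (simp add: field_simps)
      then show "\<bar>real_cond_exp M (obs_filtration M X n) (\<lambda>\<omega>'. (1 - \<theta> \<omega>') ^ k) \<omega>
          - (1 - real_cond_exp M (obs_filtration M X n) \<theta> \<omega>) ^ k\<bar> \<le> real k ^ 2 / (a + b + n)"
        using elim rising_ratio_prod_power_diff_le[OF pq(1,2), of k]
        by (simp add: p_def[symmetric] q_def[symmetric] pq(3) beta_expectation_id[OF pq(1,2)]
                      beta_expectation_one_minus_power[OF pq(1,2)])
    qed
  qed
qed

end

theorem proposition9p2: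
  fixes M :: "'w measure" and a b :: real
    and \<theta> :: "'w \<Rightarrow> real" and X :: "nat \<Rightarrow> 'w \<Rightarrow> bool" and K :: "nat \<Rightarrow> nat"
  assumes "a > 0" and "b > 0"
    and "beta_bernoulli_model M a b \<theta> X"
    and "\<And>n. K n \<ge> 1"
    and "(\<lambda>n. real (K n)) \<in> o(\<lambda>n. sqrt (real n))"
  shows "AE \<omega> in M.
    (\<lambda>n. Max ((\<lambda>k. \<bar>real_cond_exp M (obs_filtration M X n) (\<lambda>\<omega>'. (1 - \<theta> \<omega>') ^ k) \<omega>
                   - (1 - real_cond_exp M (obs_filtration M X n) \<theta> \<omega>) ^ k\<bar>) ` {1..K n}))
    \<longlonglongrightarrow> 0"
proof -
  interpret beta_bernoulli M a b \<theta> X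
    using assms(1-3) by (rule beta_bernoulli_modelD)
  have bound_tendsto: "(\<lambda>n. real (K n) ^ 2 / (a + b + n)) \<longlonglongrightarrow> 0"
    using smallo_sqrt_square_div_tendsto_zero[OF assms(5), of "a + b"] a_pos b_pos by simp
  show ?thesis
    using posterior_power_gap_le
  proof eventually_elim
    case (elim \<omega>)
    have bound_mono: "real k ^ 2 / (a + b + n) \<le> real (K n) ^ 2 / (a + b + n)" if "k \<le> K n" for n k
      using that a_pos b_pos by (intro divide_right_mono power_mono) auto
    have "\<bar>Max ((\<lambda>k. \<bar>real_cond_exp M (obs_filtration M X n) (\<lambda>\<omega>'. (1 - \<theta> \<omega>') ^ k) \<omega>
                   - (1 - real_cond_exp M (obs_filtration M X n) \<theta> \<omega>) ^ k\<bar>) ` {1..K n})\<bar>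
        \<le> real (K n) ^ 2 / (a + b + n)" for n
      using assms(4)[of n] elim
      by (subst abs_of_nonneg) (auto simp: Max_ge_iff Max_le_iff intro: order_trans[OF elim[rule_format] bound_mono])
    then show ?case
      by (intro Lim_null_comparison[OF _ bound_tendsto] always_eventually) simp
  qed
qed

end
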